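(* Let $(t_j^i)_{0\le j\le i}$ be real numbers and let $h_{j,k}^i$ ($0\le k\le i$, $0\le j\le i-k$) be defined by $h_{j,0}^i=t_j^i$ and $h_{j,k}^i=h_{j,k-1}^{i-1}+h_{j,k-1}^{i}+h_{j+1,k-1}^{i}$ for $k\ge 1$. Suppose there is a constant $c$ with $t_0^i=t_i^i=c$ for all $i\ge 0$, and that $t^i_{j}=t^{i-1}_{j-1}+t^{i-1}_{j}$ for all $i\ge 2$, $1\le j\le i-1$. Then $t_j^i=t_{i-j}^i$ for all $0\le j\le i$, and for fixed $j,k\ge 0$ the sequences $\{h_{j,k}^{i}\}_{i=j+k}^{\infty}$ and $\{h_{i-(j+k),k}^{i}\}_{i=j+k}^{\infty}$ are equal and both satisfy $\sum_{\ell=0}^{j+k+1}(-1)^{\ell}\binom{j+k+1}{\ell} h^{i+\ell}=0$ for all $i\ge j+k$, i.e., they are the same $(j+k+1)$-th order homogeneous linear recurrence sequence. *)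

theory Defs
  imports Complex_Main
begin

text \<open>hh t i j k stands for h^i_{j,k}, built from the triangle t i j = t^i_j.
  Only the values with k \<le> i, j \<le> i - k are meaningful; the recursion
  stays inside that range.\<close>
fun hh :: "(nat \<Rightarrow> nat \<Rightarrow> real) \<Rightarrow> nat \<Rightarrow> nat \<Rightarrow> nat \<Rightarrow> real" where
  "hh t i j 0 = t i j"
| "hh t i j (Suc k) = hh t (i - 1) j k + hh t i j k + hh t i (j + 1) k"

end

theory Submission imports Defs begin

text \<open>Pascal's rule with constant border c forces t^i_j = c * (i choose j), which is
  invariant under j \<mapsto> i - j; the recursion for h^i_{j,k} commutes with the
  reflection j \<mapsto> i - (j + k), so the symmetry passes to h.
  Up to sign, the sum in the statement is the (j+k+1)-th forward difference. It
  annihilates the column i \<mapsto> c * (i choose j), and by induction on k it annihilates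
  i \<mapsto> h^i_{j,k} for i \<ge> j + k: inductively, h^i_{j,k-1} is annihilated (by a difference
  of even lower order) from i = j + k - 1 on and h^i_{j+1,k-1} from i = j + k on, so all
  three terms of the recursion, including the delayed h^{i-1}_{j,k-1}, are annihilated
  from i = j + k on.\<close>

text \<open>(-1)^n times the n-th forward difference of f at i.\<close>
definition fdiff :: "nat \<Rightarrow> (nat \<Rightarrow> 'a::comm_ring_1) \<Rightarrow> nat \<Rightarrow> 'a" where
  "fdiff n f i = (\<Sum>l = 0..n. (-1) ^ l * of_nat (n choose l) * f (i + l))"

lemma fdiff_0 [simp]: "fdiff 0 f i = f i"
  by (simp add: fdiff_def)

lemma fdiff_Suc: "fdiff (Suc n) f i = fdiff n f i - fdiff n f (Suc i)"
proof -
  let ?a = "\<lambda>l. (-1) ^ Suc l * of_nat (n choose Suc l) * f (Suc i + l)"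
  let ?b = "\<lambda>l. (-1) ^ Suc l * of_nat (n choose l) * f (Suc i + l)"
  have "fdiff (Suc n) f i = f i + (\<Sum>l = 0..n. ?a l) + (\<Sum>l = 0..n. ?b l)"
    unfolding fdiff_def sum.atLeast0_atMost_Suc_shift add.assoc sum.distrib[symmetric]
    by (auto intro!: sum.cong simp: algebra_simps)
  moreover have "f i + (\<Sum>l = 0..n. ?a l) = fdiff n f i"
  proof -
    have "fdiff n f i = (\<Sum>l = 0..Suc n. (-1) ^ l * of_nat (n choose l) * f (i + l))"
      unfolding fdiff_def by (simp add: sum.atLeast0_atMost_Suc binomial_eq_0)
    then show ?thesis
      unfolding sum.atLeast0_atMost_Suc_shift by simp
  qed
  moreover have "(\<Sum>l = 0..n. ?b l) = - fdiff n f (Suc i)"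
    unfolding fdiff_def by (simp add: sum_negf[symmetric])
  ultimately show ?thesis
    by simp
qed

lemma fdiff_add: "fdiff n (\<lambda>i. f i + g i) i = fdiff n f i + fdiff n g i"
  unfolding fdiff_def by (simp add: sum.distrib algebra_simps)

lemma fdiff_diff: "fdiff n (\<lambda>i. f i - g i) i = fdiff n f i - fdiff n g i"
  unfolding fdiff_def by (simp add: sum_subtractf algebra_simps)

lemma fdiff_cmult: "fdiff n (\<lambda>i. a * f i) i = a * fdiff n f i"
  unfolding fdiff_def by (simp add: sum_distrib_left algebra_simps)

lemma fdiff_shift: "fdiff n f (Suc i) = fdiff n (\<lambda>i. f (Suc i)) i"
  unfolding fdiff_def by simp

lemma fdiff_cong: "(\<And>x. x \<ge> i \<Longrightarrow> f x = g x) \<Longrightarrow> fdiff n f i = fdiff n g i"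
  unfolding fdiff_def by (rule sum.cong) auto

lemma fdiff_binomial: "fdiff (Suc j) (\<lambda>i. of_nat (i choose j)) i = 0"
proof (induction j arbitrary: i)
  case 0
  then show ?case by (simp add: fdiff_Suc)
next
  case (Suc j)
  have "fdiff (Suc (Suc j)) (\<lambda>i. of_nat (i choose Suc j)) i
      = - fdiff (Suc j) (\<lambda>i. of_nat (Suc i choose Suc j) - of_nat (i choose Suc j)) i"
    by (simp add: fdiff_Suc fdiff_shift fdiff_diff del: binomial_Suc_Suc)
  also have "(\<lambda>i. of_nat (Suc i choose Suc j) - of_nat (i choose Suc j) :: 'a)
      = (\<lambda>i. of_nat (i choose j))"
    by simp
  finally show ?case using Suc.IH by simp
qed

definition fdiff_zero_from :: "nat \<Rightarrow> (nat \<Rightarrow> 'a::comm_ring_1) \<Rightarrow> nat \<Rightarrow> bool" where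
  "fdiff_zero_from n f m \<longleftrightarrow> (\<forall>i\<ge>m. fdiff n f i = 0)"

lemma fdiff_zero_from_cong:
  "(\<And>i. m \<le> i \<Longrightarrow> f i = g i) \<Longrightarrow> fdiff_zero_from n f m \<longleftrightarrow> fdiff_zero_from n g m"
  unfolding fdiff_zero_from_def by (metis fdiff_cong order.trans)

lemma fdiff_zero_from_Suc: "fdiff_zero_from n f m \<Longrightarrow> fdiff_zero_from (Suc n) f m"
  unfolding fdiff_zero_from_def by (simp add: fdiff_Suc)

lemma fdiff_zero_from_le:
  assumes "fdiff_zero_from n f m" "n \<le> n'"
  shows "fdiff_zero_from n' f m"
  using assms(2,1) by (induction n' rule: dec_induct) (auto intro: fdiff_zero_from_Suc)

lemma fdiff_zero_from_mono: "fdiff_zero_from n f m \<Longrightarrow> m \<le> m' \<Longrightarrow> fdiff_zero_from n f m'"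
  unfolding fdiff_zero_from_def by auto

lemma fdiff_zero_from_add:
  "fdiff_zero_from n f m \<Longrightarrow> fdiff_zero_from n g m \<Longrightarrow> fdiff_zero_from n (\<lambda>i. f i + g i) m"
  unfolding fdiff_zero_from_def by (simp add: fdiff_add)

lemma fdiff_zero_from_delay:
  assumes "fdiff_zero_from n f m"
  shows "fdiff_zero_from n (\<lambda>i. f (i - 1)) (Suc m)"
  unfolding fdiff_zero_from_def
proof (intro allI impI)
  fix i assume "Suc m \<le> i"
  then obtain i' where i: "i = Suc i'" "m \<le> i'"
    by (cases i) auto
  then have "fdiff n (\<lambda>i. f (i - 1)) i = fdiff n f i'"
    by (simp add: fdiff_shift)
  then show "fdiff n (\<lambda>i. f (i - 1)) i = 0"
    using assms i(2) unfolding fdiff_zero_from_def by simp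
qed

lemma binomial_column_fdiff_zero:
  "fdiff_zero_from (Suc j) (\<lambda>i. c * of_nat (i choose j)) m"
  unfolding fdiff_zero_from_def by (simp add: fdiff_cmult fdiff_binomial)

lemma pascal_triangle_eq_binomial:
  fixes t :: "nat \<Rightarrow> nat \<Rightarrow> 'a::comm_semiring_1"
  assumes border: "\<And>i. t i 0 = c \<and> t i i = c"
    and pascal: "\<And>i j. 2 \<le> i \<Longrightarrow> 1 \<le> j \<Longrightarrow> j \<le> i - 1 \<Longrightarrow>
                   t i j = t (i - 1) (j - 1) + t (i - 1) j"
  shows "j \<le> i \<Longrightarrow> t i j = c * of_nat (i choose j)"
proof (induction i arbitrary: j)
  case 0
  then show ?case using border by simp
next
  case (Suc i)
  show ?case
  proof (cases "j = 0 \<or> j = Suc i")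
    case True
    then show ?thesis using border by auto
  next
    case False
    then obtain j' where j: "j = Suc j'" "j' < i"
      using Suc.prems by (cases j) auto
    have "t (Suc i) j = t i j' + t i j"
      using pascal[of "Suc i" j] j by simp
    also have "\<dots> = c * of_nat (i choose j') + c * of_nat (i choose j)"
      using Suc.IH j by simp
    finally show ?thesis
      using j by (simp add: algebra_simps)
  qed
qed

lemma hh_reflect:
  assumes sym: "\<And>i j. j \<le> i \<Longrightarrow> t i j = t i (i - j)"
  shows "j + k \<le> i \<Longrightarrow> hh t i j k = hh t i (i - (j + k)) k"
proof (induction k arbitrary: i j)
  case 0
  then show ?case using sym[of j i] by simp
next
  case (Suc k)
  let ?r = "i - (j + Suc k)"
  have "hh t (i - 1) j k = hh t (i - 1) ?r k"
    using Suc.IH[of j "i - 1"] Suc.prems by (simp add: diff_diff_add)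
  moreover have "hh t i j k = hh t i (?r + 1) k"
    using Suc.IH[of j i] Suc.prems by (simp add: Suc_diff_Suc)
  moreover have "hh t i (j + 1) k = hh t i ?r k"
    using Suc.IH[of "j + 1" i] Suc.prems by simp
  ultimately show ?case by simp
qed

lemma hh_fdiff_zero_from:
  assumes columns: "\<And>j. fdiff_zero_from (Suc j) (\<lambda>i. t i j) j"
  shows "fdiff_zero_from (Suc (j + k)) (\<lambda>i. hh t i j k) (j + k)"
proof (induction k arbitrary: j)
  case 0
  then show ?case using columns by simp
next
  case (Suc k)
  let ?N = "Suc (j + Suc k)"
  have lower: "fdiff_zero_from ?N (\<lambda>i. hh t i j k) (j + k)"
    using Suc.IH[of j] by (rule fdiff_zero_from_le) simp
  have "fdiff_zero_from ?N (\<lambda>i. hh t (i - 1) j k) (Suc (j + k))"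
    using lower by (rule fdiff_zero_from_delay)
  moreover have "fdiff_zero_from ?N (\<lambda>i. hh t i j k) (Suc (j + k))"
    using lower by (rule fdiff_zero_from_mono) simp
  moreover have "fdiff_zero_from ?N (\<lambda>i. hh t i (j + 1) k) (Suc (j + k))"
    using Suc.IH[of "j + 1"] by simp
  ultimately have "fdiff_zero_from ?N
      (\<lambda>i. hh t (i - 1) j k + hh t i j k + hh t i (j + 1) k) (Suc (j + k))"
    by (intro fdiff_zero_from_add)
  then show ?case by simp
qed

theorem corollary8:
  fixes t :: "nat \<Rightarrow> nat \<Rightarrow> real" and c :: real
  assumes bound: "\<And>i. t i 0 = c \<and> t i i = c"
    and pascal: "\<And>i j. 2 \<le> i \<Longrightarrow> 1 \<le> j \<Longrightarrow> j \<le> i - 1 \<Longrightarrow>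
                   t i j = t (i - 1) (j - 1) + t (i - 1) j"
  shows "(\<forall>i j. j \<le> i \<longrightarrow> t i j = t i (i - j))
    \<and> (\<forall>j k i. j + k \<le> i \<longrightarrow> hh t i j k = hh t i (i - (j + k)) k)
    \<and> (\<forall>j k i. j + k \<le> i \<longrightarrow>
          (\<Sum>l = 0..j + k + 1. (-1) ^ l * real (j + k + 1 choose l) * hh t (i + l) j k) = 0)
    \<and> (\<forall>j k i. j + k \<le> i \<longrightarrow>
          (\<Sum>l = 0..j + k + 1. (-1) ^ l * real (j + k + 1 choose l)
              * hh t (i + l) (i + l - (j + k)) k) = 0)"
proof -
  have binomial: "t i j = c * real (i choose j)" if "j \<le> i" for i j
    using pascal_triangle_eq_binomial[OF bound pascal that] .
  have sym: "t i j = t i (i - j)" if "j \<le> i" for i j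
    using that by (metis binomial binomial_symmetric diff_le_self)
  have reflect: "hh t i j k = hh t i (i - (j + k)) k" if "j + k \<le> i" for i j k
    using hh_reflect[of t, OF sym that] .
  have columns: "fdiff_zero_from (Suc j) (\<lambda>i. t i j) j" for j
  proof -
    have "fdiff_zero_from (Suc j) (\<lambda>i. t i j) j
        \<longleftrightarrow> fdiff_zero_from (Suc j) (\<lambda>i. c * real (i choose j)) j"
      by (rule fdiff_zero_from_cong) (rule binomial)
    with binomial_column_fdiff_zero show ?thesis by blast
  qed
  have rec: "fdiff (j + k + 1) (\<lambda>i. hh t i j k) i = 0" if "j + k \<le> i" for i j k
    using hh_fdiff_zero_from[OF columns, of j k] that by (simp add: fdiff_zero_from_def)
  have rec_reflected: "fdiff (j + k + 1) (\<lambda>i. hh t i (i - (j + k)) k) i = 0"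
    if "j + k \<le> i" for i j k
  proof -
    have "fdiff (j + k + 1) (\<lambda>i. hh t i (i - (j + k)) k) i
        = fdiff (j + k + 1) (\<lambda>i. hh t i j k) i"
      using that by (intro fdiff_cong reflect[symmetric]) simp
    with rec[OF that] show ?thesis by simp
  qed
  show ?thesis
    by (intro conjI allI impI sym reflect rec[unfolded fdiff_def] rec_reflected[unfolded fdiff_def])
qed

end
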